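(* $$\sum_{i,j,k\ge0}\frac{q^{i^2+j^2+k^2}}{(q)_{i+j-k}(q)_{i+k-j}(q)_{j+k-i}}=\sum_{i,j\ge0}\frac{q^{i^2+j^2+(i-j)^2}}{(q)_{2i}(q)_{2j}}.$$
   Context: $q$ is complex with $|q|<1$. $(q)_n=\prod_{j=1}^n(1-q^j)$ for $n\ge0$ and $1/(q)_n:=0$ for $n<0$. *)

theory Defs
  imports "HOL-Analysis.Analysis"
begin

definition qpoch :: "complex \<Rightarrow> nat \<Rightarrow> complex" where
  "qpoch q n = (\<Prod>j=1..n. 1 - q ^ j)"

definition inv_qpoch :: "complex \<Rightarrow> int \<Rightarrow> complex" where
  "inv_qpoch q n = (if n < 0 then 0 else 1 / qpoch q (nat n))"

end

theory Submission
  imports Defs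
begin

(*
  The triple sum collapses to the double sum one summation at a time.

  For fixed i, j the summand vanishes unless k lies between |i - j| and i + j,
  so the sum over k is finite.  Writing i = j + d and k = d + t, it becomes
     q^((j+d)^2 + j^2 + d^2) * sum_{t<=2j} q^(t^2 + 2dt) / ((q)_t (q)_(2j-t) (q)_(2d+t)),
  and the terminating identity
     sum_{t<=n} q^(t^2 + a t) / ((q)_t (q)_(n-t) (q)_(a+t)) = 1 / ((q)_n (q)_(a+n))
  (proved by induction on n, for every q that is not a root of unity) evaluates it to the
  (i,j)-summand of the right-hand side.

  For |q| < 1 the numbers 1/(q)_n are bounded uniformly in n, so the triple
  summand is dominated by C * |q|^(i+j+k).  The triple series is therefore absolutely summable
  and may be summed first over k and then over the pairs (i,j) (Fubini for unordered sums).
*)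

section \<open>The q-Pochhammer symbol\<close>

lemma qpoch_0 [simp]: "qpoch q 0 = 1"
  by (simp add: qpoch_def)

lemma qpoch_Suc: "qpoch q (Suc n) = qpoch q n * (1 - q ^ Suc n)"
  by (simp add: qpoch_def)

lemma qpoch_nonzero:
  assumes "norm q < 1"
  shows "qpoch q n \<noteq> 0"
proof -
  have "1 - q ^ j \<noteq> 0" if "j \<ge> 1" for j
  proof
    assume "1 - q ^ j = 0"
    hence "norm (q ^ j) = 1" by simp
    moreover have "norm (q ^ j) < 1"
      using assms that by (simp add: norm_power power_less_one_iff)
    ultimately show False by simp
  qed
  thus ?thesis unfolding qpoch_def by (auto simp: prod_zero_iff)
qed

lemma inv_qpoch_of_nat [simp]: "inv_qpoch q (int n) = 1 / qpoch q n"
  by (simp add: inv_qpoch_def)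

lemma inv_qpoch_negative: "m < 0 \<Longrightarrow> inv_qpoch q m = 0"
  by (simp add: inv_qpoch_def)

section \<open>A terminating summation\<close>

definition chu_term :: "complex \<Rightarrow> nat \<Rightarrow> nat \<Rightarrow> nat \<Rightarrow> complex" where
  "chu_term q n a t = q ^ (t^2 + a*t) / (qpoch q t * qpoch q (n - t) * qpoch q (a + t))"

text \<open>The two contiguous relations that drive the induction step: removing the factor
  \<open>1 - q^t\<close>, respectively \<open>1 - q^(n+1-t)\<close>, from a term of length \<open>n+1\<close> yields a term of
  length \<open>n\<close> with parameter \<open>a+1\<close>.\<close>
lemma chu_term_lower:
  assumes nz: "\<And>m. qpoch q m \<noteq> 0"
  shows "(1 - q ^ Suc s) * chu_term q (Suc n) a (Suc s) = q ^ (a + s + 1) * chu_term q n (a+1) s"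
proof -
  have expo: "q ^ ((Suc s)^2 + a * Suc s) = q ^ (s^2 + (a + 1) * s) * q ^ (a + s + 1)"
    by (simp add: power_add[symmetric] power2_eq_square algebra_simps)
  have idx: "Suc n - Suc s = n - s" "a + Suc s = (a + 1) + s" by simp_all
  have "1 - q ^ Suc s \<noteq> 0" using nz[of "Suc s"] by (simp add: qpoch_Suc)
  thus ?thesis unfolding chu_term_def expo idx qpoch_Suc using nz
    by (simp add: field_simps del: power_Suc)
qed

lemma chu_term_upper:
  assumes nz: "\<And>m. qpoch q m \<noteq> 0" and "t \<le> n"
  shows "q ^ t * (1 - q ^ (Suc n - t)) * chu_term q (Suc n) a t
           = (1 - q ^ (a + t + 1)) * chu_term q n (a+1) t"
proof -
  have expo: "q ^ (t^2 + (a+1) * t) = q ^ t * q ^ (t^2 + a * t)"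
    by (simp add: power_add[symmetric] algebra_simps)
  have idx: "Suc n - t = Suc (n - t)" using \<open>t \<le> n\<close> by simp
  have shift: "qpoch q (a + 1 + t) = qpoch q (a + t) * (1 - q ^ (a + t + 1))"
    using qpoch_Suc[of q "a+t"] by simp
  have "1 - q ^ Suc (n-t) \<noteq> 0" "1 - q ^ (a+t+1) \<noteq> 0"
    using nz[of "Suc (n-t)"] nz[of "Suc (a+t)"] by (simp_all add: qpoch_Suc)
  thus ?thesis unfolding chu_term_def expo idx qpoch_Suc[of q "n - t"] shift using nz
    by (simp add: field_simps)
qed

text \<open>In the induction
  step we multiply by \<open>1 - q^(n+1) = (1 - q^t) + q^t (1 - q^(n+1-t))\<close>, apply the two
  contiguous relations and recombine the resulting sums.\<close>
lemma chu_sum: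
  assumes nz: "\<And>m. qpoch q m \<noteq> 0"
  shows "(\<Sum>t\<le>n. chu_term q n a t) = 1 / (qpoch q n * qpoch q (a + n))"
proof (induction n arbitrary: a)
  case 0
  then show ?case by (simp add: chu_term_def)
next
  case (Suc n)
  let ?S = "\<Sum>t\<le>Suc n. chu_term q (Suc n) a t"
  have split: "(1 - q ^ Suc n) * chu_term q (Suc n) a t
      = (1 - q ^ t) * chu_term q (Suc n) a t
        + q ^ t * (1 - q ^ (Suc n - t)) * chu_term q (Suc n) a t"
    if "t \<le> Suc n" for t
  proof -
    have "q ^ t * q ^ (Suc n - t) = q ^ Suc n" using that by (simp add: power_add[symmetric])
    thus ?thesis by (simp add: algebra_simps)
  qed
  have "(1 - q ^ Suc n) * ?S
      = (\<Sum>t\<le>Suc n. (1 - q ^ t) * chu_term q (Suc n) a t)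
        + (\<Sum>t\<le>Suc n. q ^ t * (1 - q ^ (Suc n - t)) * chu_term q (Suc n) a t)"
    unfolding sum_distrib_left sum.distrib[symmetric] by (intro sum.cong refl split) simp
  also have "(\<Sum>t\<le>Suc n. (1 - q ^ t) * chu_term q (Suc n) a t)
      = (\<Sum>s\<le>n. q ^ (a + s + 1) * chu_term q n (a+1) s)"
    by (subst sum.atMost_Suc_shift) (simp del: power_Suc add: chu_term_lower[OF nz])
  also have "(\<Sum>t\<le>Suc n. q ^ t * (1 - q ^ (Suc n - t)) * chu_term q (Suc n) a t)
      = (\<Sum>s\<le>n. (1 - q ^ (a + s + 1)) * chu_term q n (a+1) s)"
    by (subst sum.atMost_Suc) (simp add: chu_term_upper[OF nz])
  also have "(\<Sum>s\<le>n. q ^ (a + s + 1) * chu_term q n (a+1) s)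
             + (\<Sum>s\<le>n. (1 - q ^ (a + s + 1)) * chu_term q n (a+1) s)
           = (\<Sum>s\<le>n. chu_term q n (a+1) s)"
    by (simp add: sum.distrib[symmetric] algebra_simps)
  also have "\<dots> = 1 / (qpoch q n * qpoch q (a + 1 + n))" by (rule Suc.IH)
  finally have scaled: "?S * (1 - q ^ Suc n) = 1 / (qpoch q n * qpoch q (a + 1 + n))"
    by (simp only: mult.commute)
  have "1 - q ^ Suc n \<noteq> 0" using nz[of "Suc n"] by (simp add: qpoch_Suc)
  from eq_divide_imp[OF this scaled]
  have "?S = 1 / (qpoch q n * qpoch q (a + 1 + n)) / (1 - q ^ Suc n)" .
  also have "\<dots> = 1 / (qpoch q (Suc n) * qpoch q (a + Suc n))"
    by (simp add: qpoch_Suc del: power_Suc)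
  finally show ?case .
qed

section \<open>The sum over \<open>k\<close>\<close>

definition triple_term :: "complex \<Rightarrow> nat \<Rightarrow> nat \<Rightarrow> nat \<Rightarrow> complex" where
  "triple_term q i j k = q ^ (i^2 + j^2 + k^2)
            * inv_qpoch q (int i + int j - int k)
            * inv_qpoch q (int i + int k - int j)
            * inv_qpoch q (int j + int k - int i)"

definition pair_term :: "complex \<Rightarrow> nat \<Rightarrow> nat \<Rightarrow> complex" where
  "pair_term q i j = q ^ (i^2 + j^2 + (nat \<bar>int i - int j\<bar>)^2) / (qpoch q (2*i) * qpoch q (2*j))"

lemma triple_term_swap: "triple_term q i j k = triple_term q j i k"
  unfolding triple_term_def by (simp add: algebra_simps)

lemma pair_term_swap: "pair_term q i j = pair_term q j i"
  unfolding pair_term_def by (simp add: algebra_simps abs_minus_commute)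

text \<open>For \<open>j \<le> i\<close>, with \<open>i = j + d\<close>, only \<open>k = d + t\<close> with \<open>t \<le> 2j\<close> contribute, and after this
  shift the sum over \<open>k\<close> is an instance of the terminating identity with \<open>n = 2j\<close>, \<open>a = 2d\<close>.\<close>
lemma sum_triple_term_le:
  assumes nz: "\<And>m. qpoch q m \<noteq> 0" and "j \<le> i"
  shows "(\<Sum>k\<le>i+j. triple_term q i j k) = pair_term q i j"
proof -
  obtain d where i: "i = j + d" using \<open>j \<le> i\<close> le_Suc_ex by blast
  define c where "c = (j+d)^2 + j^2 + d^2"
  have vanish: "(\<Sum>k<d. triple_term q i j k) = 0"
  proof (rule sum.neutral, intro ballI)
    fix k assume "k \<in> {..<d}"
    hence "int j + int k - int i < 0" unfolding i by auto
    thus "triple_term q i j k = 0" unfolding triple_term_def by (simp add: inv_qpoch_negative)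
  qed
  have shifted: "triple_term q i j (t + d) = q ^ c * chu_term q (2*j) (2*d) t" if "t \<le> 2*j" for t
  proof -
    have args: "int i + int j - int (t + d) = int (2*j - t)"
               "int i + int (t+d) - int j = int (2*d + t)"
               "int j + int (t+d) - int i = int t"
      unfolding i using that by simp_all
    have "i^2 + j^2 + (t+d)^2 = c + (t^2 + 2*d*t)"
      unfolding c_def i by (simp add: power2_eq_square algebra_simps)
    hence "q ^ (i^2 + j^2 + (t+d)^2) = q ^ c * q ^ (t^2 + 2*d*t)"
      by (simp add: power_add)
    thus ?thesis unfolding triple_term_def args inv_qpoch_of_nat chu_term_def
      by (simp add: algebra_simps)
  qed
  have range: "{..i+j} = {..<d} \<union> {0 + d..2*j + d}" unfolding i by auto
  have "(\<Sum>k\<le>i+j. triple_term q i j k) = (\<Sum>k\<in>{0 + d..2*j + d}. triple_term q i j k)"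
    unfolding range by (subst sum.union_disjoint) (auto simp: vanish)
  also have "\<dots> = (\<Sum>t\<in>{0..2*j}. triple_term q i j (t + d))"
    by (rule sum.shift_bounds_cl_nat_ivl)
  also have "\<dots> = q ^ c * (\<Sum>t\<le>2*j. chu_term q (2*j) (2*d) t)"
    by (simp add: shifted sum_distrib_left atLeast0AtMost)
  also have "\<dots> = q ^ c / (qpoch q (2*j) * qpoch q (2*d + 2*j))"
    by (simp add: chu_sum[OF nz])
  also have "\<dots> = pair_term q i j"
    unfolding c_def pair_term_def i by (simp add: algebra_simps)
  finally show ?thesis .
qed

text \<open>The sum over \<open>k\<close> as an unordered series: all terms with \<open>k > i + j\<close> vanish.\<close>
lemma infsum_triple_term:
  assumes nz: "\<And>m. qpoch q m \<noteq> 0"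
  shows "(\<Sum>\<^sub>\<infinity>k. triple_term q i j k) = pair_term q i j"
proof -
  have "(\<Sum>\<^sub>\<infinity>k. triple_term q i j k) = (\<Sum>\<^sub>\<infinity>k\<in>{..i+j}. triple_term q i j k)"
  proof (rule infsum_cong_neutral)
    fix k assume "k \<in> UNIV - {..i+j}"
    hence "int i + int j - int k < 0" by auto
    thus "triple_term q i j k = 0" unfolding triple_term_def by (simp add: inv_qpoch_negative)
  qed auto
  also have "\<dots> = (\<Sum>k\<le>i+j. triple_term q i j k)" by simp
  also have "\<dots> = pair_term q i j"
  proof (cases "j \<le> i")
    case True
    then show ?thesis by (rule sum_triple_term_le[OF nz])
  next
    case False
    hence "(\<Sum>k\<le>j+i. triple_term q j i k) = pair_term q j i"
      by (intro sum_triple_term_le[OF nz]) simp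
    thus ?thesis by (simp add: triple_term_swap pair_term_swap add.commute)
  qed
  finally show ?thesis .
qed

section \<open>Absolute summability\<close>

text \<open>Elementary inequality behind the lower bound for \<open>|(q)\<^sub>n|\<close>: for \<open>0 \<le> x \<le> r < 1\<close>,
  \<open>1 - x \<ge> exp (-x/(1-r))\<close>.\<close>
lemma exp_le_one_minus:
  fixes r x :: real
  assumes r: "r < 1" and x: "0 \<le> x" "x \<le> r"
  shows "exp (- (x / (1 - r))) \<le> 1 - x"
proof -
  define y where "y = x / (1 - r)"
  have "0 \<le> y" using r x by (simp add: y_def)
  hence "exp (-y) \<le> 1 / (1 + y)"
    using exp_ge_add_one_self[of y] by (simp add: exp_minus divide_simps)
  also have "1 / (1 + y) = (1 - r) / (1 - r + x)"
    using r unfolding y_def by (simp add: field_simps)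
  also have "\<dots> \<le> 1 - x"
  proof -
    have "1 - r \<le> (1 - x) * (1 - r + x)"
      using mult_nonneg_nonneg[of x "r - x"] x by (simp add: algebra_simps)
    thus ?thesis using r x by (simp add: divide_simps)
  qed
  finally show ?thesis unfolding y_def .
qed

text \<open>Inside the unit disc \<open>1/(q)\<^sub>n\<close> is bounded uniformly in \<open>n\<close>: comparing factorwise,
  \<open>|(q)\<^sub>n| \<ge> \<Prod>j=1..n. (1 - r^j) \<ge> exp (-(\<Sum>j\<ge>1. r^j)/(1-r))\<close> with \<open>r = |q|\<close>.\<close>
lemma norm_inv_qpoch_le:
  assumes q: "norm q < 1"
  shows "norm (inv_qpoch q m) \<le> exp (norm q / (1 - norm q)^2)"
proof (cases "m < 0")
  case True
  thus ?thesis by (simp add: inv_qpoch_negative)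
next
  case False
  then obtain n where m: "m = int n" by (metis nonneg_int_cases not_less)
  define r where "r = norm q"
  have r: "0 \<le> r" "r < 1" using q by (auto simp: r_def)
  have power_le_r: "r ^ j \<le> r" if "j \<in> {1..n}" for j
    using that r power_decreasing[of 1 j r] by simp
  have "(\<Sum>j\<in>{1..n}. r ^ j) \<le> r / (1 - r)"
    using has_sum_geometric_from_1[of r] r
    by (intro finite_sum_le_has_sum) auto
  hence "exp (- (r / (1 - r)^2)) \<le> exp (- ((\<Sum>j\<in>{1..n}. r ^ j) / (1 - r)))"
    using r by (simp add: power2_eq_square divide_right_mono flip: divide_divide_eq_left)
  also have "\<dots> = (\<Prod>j\<in>{1..n}. exp (- (r ^ j / (1 - r))))"
    by (simp add: exp_sum sum_divide_distrib sum_negf[symmetric])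
  also have "\<dots> \<le> (\<Prod>j\<in>{1..n}. 1 - r ^ j)"
    using r power_le_r by (intro prod_mono conjI exp_le_one_minus) auto
  also have "\<dots> \<le> (\<Prod>j\<in>{1..n}. norm (1 - q ^ j))"
    using r power_le_r norm_triangle_ineq2[of 1 "q ^ _"]
    by (intro prod_mono) (auto simp: r_def norm_power power_le_one)
  also have "\<dots> = norm (qpoch q n)" by (simp add: qpoch_def prod_norm)
  finally have lower: "exp (- (r / (1 - r)^2)) \<le> norm (qpoch q n)" .
  have "norm (inv_qpoch q m) = 1 / norm (qpoch q n)" by (simp add: m norm_divide)
  also have "\<dots> \<le> 1 / exp (- (r / (1 - r)^2))"
    using lower by (intro divide_left_mono mult_pos_pos) (auto intro: less_le_trans[OF exp_gt_zero])
  finally show ?thesis by (simp add: r_def exp_minus divide_inverse)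
qed

lemma summable_on_product_nonneg:
  fixes a :: "'x \<Rightarrow> real" and b :: "'y \<Rightarrow> real"
  assumes "\<And>x. a x \<ge> 0" "\<And>y. b y \<ge> 0" and a: "a summable_on A" and b: "b summable_on B"
  shows "(\<lambda>(x,y). a x * b y) summable_on A \<times> B"
proof (rule summable_on_SigmaI[where g = "\<lambda>x. a x * infsum b B"])
  show "((\<lambda>y. case (x, y) of (x, y) \<Rightarrow> a x * b y) has_sum a x * infsum b B) B" for x
    using has_sum_cmult_right[OF has_sum_infsum[OF b], of "a x"] by simp
  show "(\<lambda>x. a x * infsum b B) summable_on A" by (rule summable_on_cmult_left[OF a])
qed (use assms in simp)

text \<open>The triple summand, grouped as \<open>((i,j),k)\<close>, is dominated by \<open>C\<^sup>3 |q|^i |q|^j |q|^k\<close>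
  because \<open>|q|^(n\<^sup>2) \<le> |q|^n\<close>, hence absolutely summable.\<close>
lemma triple_term_summable:
  assumes q: "norm q < 1"
  shows "(\<lambda>((i,j),k). triple_term q i j k) summable_on UNIV"
proof -
  define r where "r = norm q"
  define C where "C = exp (norm q / (1 - norm q)^2)"
  have r: "0 \<le> r" "r < 1" using q by (auto simp: r_def)
  have "0 \<le> C" by (simp add: C_def)
  have geom: "(\<lambda>n::nat. r ^ n) summable_on UNIV"
    using r by (subst summable_on_UNIV_nonneg_real_iff) (auto intro: summable_geometric)
  have dom: "(\<lambda>((i,j),k). C^3 * ((r ^ i * r ^ j) * r ^ k)) summable_on UNIV"
    using summable_on_cmult_right[OF summable_on_product_nonneg[OF _ _
            summable_on_product_nonneg[OF _ _ geom geom] geom], of "C^3"] r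
    by (simp add: case_prod_unfold)
  have square_le: "r ^ (n^2) \<le> r ^ n" for n :: nat
    using r by (intro power_decreasing) (auto simp: power2_eq_square)
  have bound: "norm (triple_term q i j k) \<le> C^3 * ((r ^ i * r ^ j) * r ^ k)" for i j k
  proof -
    have inv: "norm (inv_qpoch q m) \<le> C" for m
      unfolding C_def by (rule norm_inv_qpoch_le[OF q])
    have "norm (triple_term q i j k) = r ^ (i^2) * r ^ (j^2) * r ^ (k^2)
        * (norm (inv_qpoch q (int i + int j - int k)) * norm (inv_qpoch q (int i + int k - int j))
           * norm (inv_qpoch q (int j + int k - int i)))"
      unfolding triple_term_def r_def by (simp add: norm_mult norm_power power_add)
    also have "\<dots> \<le> r ^ i * r ^ j * r ^ k * (C * C * C)"
      using r \<open>0 \<le> C\<close> square_le inv by (intro mult_mono) (auto intro: mult_nonneg_nonneg)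
    finally show ?thesis by (simp add: power3_eq_cube mult_ac)
  qed
  have "(\<lambda>x. norm ((\<lambda>((i,j),k). triple_term q i j k) x)) summable_on UNIV"
    by (rule Infinite_Sum.abs_summable_on_comparison_test'[OF dom]) (auto simp: bound)
  thus ?thesis by (rule abs_summable_summable)
qed

theorem mainTheorem16:
  fixes q :: complex
  assumes "norm q < 1"
  shows "(\<Sum>\<^sub>\<infinity>(i,j,k)\<in>(UNIV :: (nat \<times> nat \<times> nat) set).
            q ^ (i^2 + j^2 + k^2)
            * inv_qpoch q (int i + int j - int k)
            * inv_qpoch q (int i + int k - int j)
            * inv_qpoch q (int j + int k - int i))
       = (\<Sum>\<^sub>\<infinity>(i,j)\<in>(UNIV :: (nat \<times> nat) set).
            q ^ (i^2 + j^2 + (nat \<bar>int i - int j\<bar>)^2) / (qpoch q (2*i) * qpoch q (2*j)))"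
proof -
  have nz: "\<And>m. qpoch q m \<noteq> 0" using qpoch_nonzero[OF assms] .
  have regroup: "bij_betw (\<lambda>((i,j),k). (i,j,k)) UNIV (UNIV :: (nat \<times> nat \<times> nat) set)"
    by (rule bij_betwI[where g = "\<lambda>(i,j,k). ((i,j),k)"]) auto
  have "(\<Sum>\<^sub>\<infinity>(i,j,k). triple_term q i j k) = (\<Sum>\<^sub>\<infinity>((i,j),k). triple_term q i j k)"
    using infsum_reindex_bij_betw[OF regroup, of "\<lambda>(i,j,k). triple_term q i j k"]
    by (simp add: case_prod_unfold)
  also have "\<dots> = (\<Sum>\<^sub>\<infinity>(i,j). \<Sum>\<^sub>\<infinity>k. triple_term q i j k)"
    using infsum_Sigma_banach[of "\<lambda>((i,j),k). triple_term q i j k" UNIV "\<lambda>_. UNIV"]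
      triple_term_summable[OF assms] by (simp add: case_prod_unfold)
  also have "\<dots> = (\<Sum>\<^sub>\<infinity>(i,j). pair_term q i j)"
    by (simp add: infsum_triple_term[OF nz] case_prod_beta)
  finally show ?thesis unfolding triple_term_def pair_term_def .
qed

end
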